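(* Under the Gamma/Beta-prime approximation described in the context, the ergodic rate of the center user $\mathcal{R}_{i,c} = \int_{0}^{\infty} \log_2(1 + x) f_{\gamma_{i,c}}(x)\, dx$ is given by \[ \mathcal{R}_{i,c} = \frac{1}{\ln(2)\Lambda_{i,c}}\,G_{3,3}^{3,2}\left(\frac{\theta_{\mathcal{W}_{i,c}}}{\rho\zeta_{i,c}\theta_{Z_{i,c}}}\,\bigg\vert \begin{array}{c} 0,\,1-k_{\mathcal{W}_{i,c}},\,1 \\ 0,\,0,\,k_{Z_{i,c}} \end{array} \right), \] where $G_{p,q}^{m,n}(\cdot)$ is the Meijer G-function, $\Lambda_{i,c}=B(k_{Z_{i,c}},k_{\mathcal{W}_{i,c}})\,\Gamma(\kappa_{i,c})$, $\kappa_{i,c}=k_{Z_{i,c}}+k_{\mathcal{W}_{i,c}}$, and $B(\cdot,\cdot)$ is the Euler Beta function.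
   Context: Downlink two-cell STAR-RIS assisted CoMP-NOMA network: base stations BS$_i$, $i\in\{1,2\}$, each serve a two-user NOMA pair of its cell-center user U$_{c_i}$ and a shared edge user; U$_{c_i}$ suffers inter-cell interference from the other base station BS$_{i'}$, $i'\neq i$. A STAR-RIS with $K$ elements (energy-splitting, amplitude coefficient $\beta$) assists the links. With Nakagami-$m$ fading, the effective channel power gain $Z_{i,c}=(|h_{i,c}|+\sqrt{\beta}\sum_{k=1}^K|h_{R,c}||h_{i,R}|)^2$ is approximated (large $K$, moment matching) by a Gamma random variable with shape $k_{Z_{i,c}}$ and scale $\theta_{Z_{i,c}}$. With transmit SNR $\rho$ and center-user power-allocation factor $\zeta_{i,c}$, the SINR of U$_{c_i}$ for decoding its own message (after SIC) is $\gamma_{i,c}=\rho\zeta_{i,c}Z_{i,c}/\mathcal{W}_{i,c}$ with $\mathcal{W}_{i,c}=\rho|h_{i',c}|^2+1$ (interference plus normalized noise), where $|h_{i',c}|$ is Nakagami-$m$. $\mathcal{W}_{i,c}$ is approximated by a Gamma RV with shape $k_{\mathcal{W}_{i,c}}=\mu^2/(\mu^{(2)}-\mu^2)$ and scale $\theta_{\mathcal{W}_{i,c}}=(\mu^{(2)}-\mu^2)/\mu$ from its first two moments $\mu,\mu^{(2)}$. Consequently $\gamma_{i,c}$ is approximately Beta-prime distributed with PDF $f_{\gamma_{i,c}}(x)=\frac{\theta_{\mathcal{W}_{i,c}}}{\rho\zeta_{i,c}\theta_{Z_{i,c}}B(k_{Z_{i,c}},k_{\mathcal{W}_{i,c}})}\left(\frac{x\theta_{\mathcal{W}_{i,c}}}{\rho\zeta_{i,c}\theta_{Z_{i,c}}}\right)^{k_{Z_{i,c}}-1}\left(1+\frac{x\theta_{\mathcal{W}_{i,c}}}{\rho\zeta_{i,c}\theta_{Z_{i,c}}}\right)^{-(k_{Z_{i,c}}+k_{\mathcal{W}_{i,c}})}$,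 $x>0$. *)

theory Defs
  imports "HOL-Analysis.Analysis"
begin

text \<open>Reciprocal Gamma functions (rGamma, entire) are used for the denominator.\<close>
definition meijerG_kernel :: "nat \<Rightarrow> nat \<Rightarrow> real list \<Rightarrow> real list \<Rightarrow> complex \<Rightarrow> complex" where
  "meijerG_kernel m n as bs s =
     (\<Prod>j<m. Gamma (of_real (bs ! j) - s)) *
     (\<Prod>j<n. Gamma (1 - of_real (as ! j) + s)) *
     (\<Prod>j\<in>{m..<length bs}. rGamma (1 - of_real (bs ! j) + s)) *
     (\<Prod>j\<in>{n..<length as}. rGamma (of_real (as ! j) - s))"

text \<open>A real abscissa c separates the poles of Gamma(b_j - s), j<m (at s = b_j + k)
  from the poles of Gamma(1 - a_j + s), j<n (at s = a_j - 1 - k).\<close>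
definition meijerG_separating :: "nat \<Rightarrow> nat \<Rightarrow> real list \<Rightarrow> real list \<Rightarrow> real \<Rightarrow> bool" where
  "meijerG_separating m n as bs c \<longleftrightarrow>
     (\<forall>j<m. c < bs ! j) \<and> (\<forall>j<n. as ! j - 1 < c)"

text \<open>Meijer G-function for real parameters and real argument z > 0, defined by the
  Mellin--Barnes integral (1/(2 pi i)) \<integral>_L kernel(s) z^s ds along the vertical line
  L = {c + i t} (traversed from -i\<infinity> to +i\<infinity>, so ds = i dt) with c separating the two
  families of poles.  This is the standard contour L for the Meijer G-function whenever a
  separating vertical line exists and m + n > (p + q)/2 (which covers z > 0).\<close>
definition meijerG :: "nat \<Rightarrow> nat \<Rightarrow> real list \<Rightarrow> real list \<Rightarrow> real \<Rightarrow> complex" where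
  "meijerG m n as bs z =
     (let c = (SOME c. meijerG_separating m n as bs c) in
      complex_of_real (1 / (2 * pi)) *
      (LINT t|lborel. meijerG_kernel m n as bs (Complex c t) * (complex_of_real z) powr (Complex c t)))"

definition gamma_c_pdf :: "real \<Rightarrow> real \<Rightarrow> real \<Rightarrow> real \<Rightarrow> real \<Rightarrow> real \<Rightarrow> real \<Rightarrow> real" where
  "gamma_c_pdf \<rho> \<zeta> kZ \<theta>Z kW \<theta>W x =
     \<theta>W / (\<rho> * \<zeta> * \<theta>Z * Beta kZ kW) *
     (x * \<theta>W / (\<rho> * \<zeta> * \<theta>Z)) powr (kZ - 1) *
     (1 + x * \<theta>W / (\<rho> * \<zeta> * \<theta>Z)) powr (- (kZ + kW))"

definition ergodic_rate_c :: "real \<Rightarrow> real \<Rightarrow> real \<Rightarrow> real \<Rightarrow> real \<Rightarrow> real \<Rightarrow> real" where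
  "ergodic_rate_c \<rho> \<zeta> kZ \<theta>Z kW \<theta>W =
     (LBINT x:{0<..}. log 2 (1 + x) * gamma_c_pdf \<rho> \<zeta> kZ \<theta>Z kW \<theta>W x)"

end

theory Submission
  imports Defs "HOL-Probability.Probability"
begin

text \<open>On a vertical line \<open>Re s = c\<close> with \<open>max (-1) (-kW) < c < 0\<close> the Mellin--Barnes
  integrand of this Meijer G-function factors as
  \<open>\<Gamma>(kZ + kW) * B(1 + s, -s) / (-s) * B(kZ - s, kW + s)\<close>.
  The last factor is the integral over \<open>z\<close> of \<open>e^((kZ - s) z) (1 + e^z)^-(kZ + kW)\<close>, a Mellin
  transform of the Beta-prime density in logarithmic coordinates.  The first,
  \<open>B(1 + s, -s) = \<Gamma>(1 + s) \<Gamma>(-s)\<close>, is the Fourier transform in \<open>Im s\<close> of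
  \<open>e^((1 + c) u) / (1 + e^u)\<close>; Fourier inversion, together with writing \<open>1 / (-s)\<close> as the
  integral of \<open>e^(-s v)\<close> over \<open>v < 0\<close>, integrates \<open>B(1 + s, -s) / (-s) e^(s \<xi>)\<close> along the
  line to \<open>2 \<pi> ln (1 + e^-\<xi>)\<close>.  Exchanging the order of integration turns \<open>G(a)\<close> into
  \<open>\<Gamma>(kZ + kW)\<close> times the integral of \<open>e^(kZ z) (1 + e^z)^-(kZ + kW) ln (1 + e^z / a)\<close>, and the
  substitution \<open>a x = e^z\<close> turns the ergodic rate into the same integral divided by
  \<open>B(kZ, kW) ln 2\<close>.\<close>

lemma one_plus_exp_pos [simp]: "0 < 1 + exp (x::real)"
  and one_plus_exp_neq_zero [simp]: "1 + exp (x::real) \<noteq> 0"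
  using add_pos_pos[OF zero_less_one exp_gt_zero[of x]] by simp_all

lemma range_exp_real: "range (exp :: real \<Rightarrow> real) = {0<..}"
  by (auto simp: image_iff) (metis exp_ln)

lemma set_integrable_lborel_iff_absolutely_integrable_on:
  fixes f :: "real \<Rightarrow> 'a::{banach, second_countable_topology}"
  assumes "f \<in> borel_measurable borel" "S \<in> sets borel"
  shows "set_integrable lborel S f \<longleftrightarrow> f absolutely_integrable_on S"
  using assms unfolding set_integrable_def
  by (subst integrable_completion[symmetric]) auto

lemma complex_integrable_iff_Re_Im:
  fixes g :: "'a \<Rightarrow> complex"
  shows "integrable M g \<longleftrightarrow> integrable M (\<lambda>x. Re (g x)) \<and> integrable M (\<lambda>x. Im (g x))"
proof safe
  assume "integrable M (\<lambda>x. Re (g x))" "integrable M (\<lambda>x. Im (g x))"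
  then have "integrable M (\<lambda>x. complex_of_real (Re (g x)) + \<i> * complex_of_real (Im (g x)))"
    by (intro Bochner_Integration.integrable_add Bochner_Integration.integrable_mult_right
        integrable_of_real)
  moreover have "(\<lambda>x. complex_of_real (Re (g x)) + \<i> * complex_of_real (Im (g x))) = g"
    by (auto simp: complex_eq_iff)
  ultimately show "integrable M g" by simp
qed auto

lemma norm_divide_le_abs_Re:
  fixes x w :: complex
  assumes "Re w \<noteq> 0"
  shows "norm (x / w) \<le> norm x / \<bar>Re w\<bar>"
proof -
  have "\<bar>Re w\<bar> \<le> norm w"
    by (rule abs_Re_le_cmod)
  moreover have "0 < norm w * \<bar>Re w\<bar>"
    using assms calculation by (intro mult_pos_pos) auto
  ultimately show ?thesis
    unfolding norm_divide by (intro divide_left_mono) simp_all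
qed

lemma Fubini_integral_product_bound:
  fixes F :: "real \<Rightarrow> real \<Rightarrow> complex" and f g :: "real \<Rightarrow> real"
  assumes Fm: "case_prod F \<in> borel_measurable (lborel \<Otimes>\<^sub>M lborel)"
    and bound: "\<And>x y. norm (F x y) \<le> f x * g y"
    and f: "integrable lborel f" and g: "integrable lborel g"
  shows "integrable (lborel \<Otimes>\<^sub>M lborel) (case_prod F)"
    and "(LINT x|lborel. LINT y|lborel. F x y) = (LINT y|lborel. LINT x|lborel. F x y)"
proof -
  have [measurable]: "f \<in> borel_measurable borel" "g \<in> borel_measurable borel"
    using borel_measurable_integrable[OF f] borel_measurable_integrable[OF g] by simp_all
  have "integrable (lborel \<Otimes>\<^sub>M lborel) (\<lambda>(x, y). norm (f x) * norm (g y))"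
    by (rule lborel_pair.Fubini_integrable) (use f g in \<open>auto intro: integrable_mult_left\<close>)
  then show Fint: "integrable (lborel \<Otimes>\<^sub>M lborel) (case_prod F)"
  proof (rule Bochner_Integration.integrable_bound[OF _ Fm], intro AE_I2)
    fix xy :: "real \<times> real"
    show "norm (case_prod F xy) \<le> norm ((\<lambda>(x, y). norm (f x) * norm (g y)) xy)"
      using bound[of "fst xy" "snd xy"] abs_ge_self[of "f (fst xy) * g (snd xy)"]
      by (cases xy) (simp add: abs_mult)
  qed
  show "(LINT x|lborel. LINT y|lborel. F x y) = (LINT y|lborel. LINT x|lborel. F x y)"
    by (rule lborel_pair.Fubini_integral[OF Fint, symmetric])
qed

lemma absolutely_integrable_exp_substitution:
  fixes f :: "real \<Rightarrow> real"
  shows "(\<lambda>u. exp u * f (exp u)) absolutely_integrable_on UNIV \<and>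
           integral UNIV (\<lambda>u. exp u * f (exp u)) = b
         \<longleftrightarrow> f absolutely_integrable_on {0<..} \<and> integral {0<..} f = b"
proof -
  have "(exp has_field_derivative exp u) (at u within UNIV)" for u :: real
    by (rule DERIV_exp)
  moreover have "inj_on (exp :: real \<Rightarrow> real) UNIV"
    by (simp add: inj_on_def)
  ultimately show ?thesis
    using has_absolute_integral_change_of_variables_1'[of UNIV exp exp f b]
    by (simp add: range_exp_real)
qed

lemma integrable_exp_substitution_iff:
  fixes f :: "real \<Rightarrow> real"
  assumes "(\<lambda>u. exp u * f (exp u)) \<in> borel_measurable borel"
  shows "integrable lborel (\<lambda>u. exp u * f (exp u)) \<longleftrightarrow> f absolutely_integrable_on {0<..}"
proof -
  have "integrable lborel (\<lambda>u. exp u * f (exp u))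
        \<longleftrightarrow> (\<lambda>u. exp u * f (exp u)) absolutely_integrable_on UNIV"
    using set_integrable_lborel_iff_absolutely_integrable_on[OF assms, of UNIV]
    by (simp add: set_integrable_def)
  also have "\<dots> \<longleftrightarrow> f absolutely_integrable_on {0<..}"
    by (metis absolutely_integrable_exp_substitution)
  finally show ?thesis .
qed

lemma integral_exp_substitution:
  fixes f :: "real \<Rightarrow> real"
  assumes "f absolutely_integrable_on {0<..}"
    and "(\<lambda>u. exp u * f (exp u)) \<in> borel_measurable borel"
  shows "(LINT u|lborel. exp u * f (exp u)) = integral {0<..} f"
proof -
  have "integrable lborel (\<lambda>u. exp u * f (exp u))"
    using assms by (simp add: integrable_exp_substitution_iff)
  then have "(LINT u|lborel. exp u * f (exp u)) = integral UNIV (\<lambda>u. exp u * f (exp u))"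
    using set_borel_integral_eq_integral(2)[of UNIV "\<lambda>u. exp u * f (exp u)"]
    by (simp add: set_integrable_def set_lebesgue_integral_def)
  also have "\<dots> = integral {0<..} f"
    using absolutely_integrable_exp_substitution[of f "integral {0<..} f"] assms(1) by simp
  finally show ?thesis .
qed

lemma exp_substitution_complex:
  fixes f :: "real \<Rightarrow> complex"
  assumes f: "f absolutely_integrable_on {0<..}"
    and [measurable]: "(\<lambda>u. exp u *\<^sub>R f (exp u)) \<in> borel_measurable borel"
  shows "integrable lborel (\<lambda>u. exp u *\<^sub>R f (exp u))"
    and "(LINT u|lborel. exp u *\<^sub>R f (exp u)) = integral {0<..} f"
proof -
  have Re: "(\<lambda>x. Re (f x)) absolutely_integrable_on {0<..}"
    and Im: "(\<lambda>x. Im (f x)) absolutely_integrable_on {0<..}"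
    using integrable_Re[OF f[unfolded set_integrable_def]] integrable_Im[OF f[unfolded set_integrable_def]]
    unfolding set_integrable_def by simp_all
  have "(\<lambda>u. Re (exp u *\<^sub>R f (exp u))) \<in> borel_measurable borel"
    and "(\<lambda>u. Im (exp u *\<^sub>R f (exp u))) \<in> borel_measurable borel"
    by measurable
  then have mRe: "(\<lambda>u. exp u * Re (f (exp u))) \<in> borel_measurable borel"
    and mIm: "(\<lambda>u. exp u * Im (f (exp u))) \<in> borel_measurable borel"
    by simp_all
  show int: "integrable lborel (\<lambda>u. exp u *\<^sub>R f (exp u))"
    using Re Im integrable_exp_substitution_iff[OF mRe] integrable_exp_substitution_iff[OF mIm]
    by (simp add: complex_integrable_iff_Re_Im)
  have fI: "(f has_integral integral {0<..} f) {0<..}"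
    using f set_lebesgue_integral_eq_integral(1) by blast
  show "(LINT u|lborel. exp u *\<^sub>R f (exp u)) = integral {0<..} f"
    using integral_Re[OF int] integral_Im[OF int]
      integral_exp_substitution[OF Re mRe] integral_exp_substitution[OF Im mIm]
      integral_unique[OF has_integral_Re[OF fI]] integral_unique[OF has_integral_Im[OF fI]]
    by (intro complex_eqI) simp_all
qed

lemma Gamma_log_integral:
  fixes z :: complex
  assumes z: "Re z > 0"
  shows "integrable lborel (\<lambda>u. exp (z * of_real u - of_real (exp u)))"
    and "(LINT u|lborel. exp (z * of_real u - of_real (exp u))) = Gamma z"
proof -
  let ?f = "\<lambda>t. of_real t powr (z - 1) / of_real (exp t) :: complex"
  have eq: "exp u *\<^sub>R ?f (exp u) = exp (z * of_real u - of_real (exp u))" for u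
  proof -
    have "of_real (exp u) powr (z - 1) = exp ((z - 1) * of_real u)"
      by (simp add: powr_def Ln_of_real mult.commute)
    then show ?thesis
      by (simp add: scaleR_conv_of_real exp_diff exp_of_real[symmetric] field_simps
          exp_add[symmetric])
  qed
  have "(\<lambda>u. exp u *\<^sub>R ?f (exp u)) \<in> borel_measurable borel"
    unfolding eq by (intro borel_measurable_continuous_onI continuous_intros)
  note subst = exp_substitution_complex[OF absolutely_integrable_Gamma_integral'[OF z] this]
  show "integrable lborel (\<lambda>u. exp (z * of_real u - of_real (exp u)))"
    using subst(1) unfolding eq .
  show "(LINT u|lborel. exp (z * of_real u - of_real (exp u))) = Gamma z"
    using subst(2) integral_unique[OF Gamma_integral_complex'[OF z]] unfolding eq by simp
qed

lemma Gamma_log_integral_scaled: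
  fixes z :: complex and l :: real
  assumes z: "Re z > 0" and l: "l > 0"
  shows "integrable lborel (\<lambda>u. exp (z * of_real u - of_real (l * exp u)))"
    and "(LINT u|lborel. exp (z * of_real u - of_real (l * exp u))) = Gamma z * exp (- z * of_real (ln l))"
proof -
  let ?g = "\<lambda>u. exp (z * of_real u - of_real (l * exp u))"
  have shift: "?g (- ln l + 1 * u) = exp (- z * of_real (ln l)) * exp (z * of_real u - of_real (exp u))" for u
    using l by (simp add: exp_diff exp_add exp_minus field_simps exp_of_real[symmetric] del: exp_of_real)
  have "integrable lborel (\<lambda>u. ?g (- ln l + 1 * u))"
    unfolding shift by (intro Bochner_Integration.integrable_mult_right Gamma_log_integral(1)[OF z])
  then show "integrable lborel ?g"
    using lborel_integrable_real_affine_iff[of 1 ?g "- ln l"] by simp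
  have "(LINT u|lborel. ?g u) = (LINT u|lborel. ?g (- ln l + 1 * u))"
    using lborel_integral_real_affine[of 1 ?g "- ln l"] by simp
  also have "\<dots> = Gamma z * exp (- z * of_real (ln l))"
    unfolding shift by (simp add: Gamma_log_integral(2)[OF z])
  finally show "(LINT u|lborel. ?g u) = Gamma z * exp (- z * of_real (ln l))" .
qed

lemma Gamma_log_integral_scaled_real:
  fixes x l :: real
  assumes x: "x > 0" and l: "l > 0"
  shows "integrable lborel (\<lambda>u. exp (x * u - l * exp u))"
    and "(LINT u|lborel. exp (x * u - l * exp u)) = Gamma x * exp (- x * ln l)"
proof -
  have "Re (complex_of_real x) > 0" using x by simp
  note G = Gamma_log_integral_scaled[OF this l]
  have eq: "Re (exp (of_real x * of_real u - of_real (l * exp u))) = exp (x * u - l * exp u)" for u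
  proof -
    have "complex_of_real x * of_real u - of_real (l * exp u) = of_real (x * u - l * exp u)"
      by simp
    then show ?thesis by (simp only: exp_of_real Re_complex_of_real)
  qed
  show "integrable lborel (\<lambda>u. exp (x * u - l * exp u))"
    using integrable_Re[OF G(1)] unfolding eq .
  have "exp (- complex_of_real x * complex_of_real (ln l)) = complex_of_real (exp (- x * ln l))"
    by (simp flip: exp_of_real)
  then show "(LINT u|lborel. exp (x * u - l * exp u)) = Gamma x * exp (- x * ln l)"
    using integral_Re[OF G(1)] G(2) unfolding eq by (simp add: Gamma_complex_of_real)
qed

lemma integrable_Beta_log_kernel:
  fixes z :: complex and k :: real
  assumes z: "Re z > 0" and zk: "Re z < k"
  shows "integrable (lborel \<Otimes>\<^sub>M lborel)
           (\<lambda>(q, u). exp (z * of_real u) * of_real (exp (k * q - (1 + exp u) * exp q)))"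
    (is "integrable _ (case_prod ?F)")
proof (rule lborel_pair.Fubini_integrable)
  show "case_prod ?F \<in> borel_measurable (lborel \<Otimes>\<^sub>M lborel)"
    by measurable
  have "(LINT u|lborel. norm (?F q u)) = Gamma (Re z) * exp ((k - Re z) * q - exp q)" for q
  proof -
    have "norm (?F q u) = exp (k * q - exp q) * exp (Re z * u - exp q * exp u)" for u
      by (simp add: norm_mult norm_exp_eq_Re exp_add[symmetric] algebra_simps)
    then have "(LINT u|lborel. norm (?F q u))
        = exp (k * q - exp q) * (LINT u|lborel. exp (Re z * u - exp q * exp u))"
      by simp
    also have "\<dots> = exp (k * q - exp q) * (Gamma (Re z) * exp (- Re z * ln (exp q)))"
      using Gamma_log_integral_scaled_real(2)[OF z, of "exp q"] by simp
    finally show ?thesis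
      by (simp add: exp_add[symmetric] algebra_simps)
  qed
  moreover have "integrable lborel (\<lambda>q. exp ((k - Re z) * q - 1 * exp q))"
    using zk by (intro Gamma_log_integral_scaled_real(1)) simp_all
  ultimately show "integrable lborel (\<lambda>q. LINT u|lborel. norm (case (q, u) of (q, u) \<Rightarrow> ?F q u))"
    by simp
  have F_alt: "?F q u = of_real (exp (k * q - exp q)) * exp (z * of_real u - of_real (exp q * exp u))" for q u
    by (simp add: exp_add[symmetric] exp_diff[symmetric] exp_of_real[symmetric] algebra_simps
        del: exp_of_real)
  show "AE q in lborel. integrable lborel (\<lambda>u. case (q, u) of (q, u) \<Rightarrow> ?F q u)"
  proof (rule AE_I2)
    fix q
    from Bochner_Integration.integrable_mult_right[OF Gamma_log_integral_scaled(1)[OF z exp_gt_zero[of q]],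
        of "of_real (exp (k * q - exp q))"]
    show "integrable lborel (\<lambda>u. case (q, u) of (q, u) \<Rightarrow> ?F q u)"
      by (simp only: prod.case F_alt)
  qed
qed

text \<open>Write \<open>\<Gamma>(k) (1 + e^u)^-k\<close> as a Gamma integral and exchange the order of integration.\<close>
lemma Beta_log_integral:
  fixes z :: complex and k :: real
  assumes z: "Re z > 0" and zk: "Re z < k"
  shows "integrable lborel (\<lambda>u. exp (z * of_real u) * of_real ((1 + exp u) powr (- k)))"
    and "(LINT u|lborel. exp (z * of_real u) * of_real ((1 + exp u) powr (- k))) = Beta z (of_real k - z)"
proof -
  have k: "k > 0" using z zk by simp
  have Gk: "Gamma k \<noteq> 0"
    using k by (simp add: Gamma_real_pos less_imp_neq[symmetric])
  define F where "F q u = exp (z * of_real u) * of_real (exp (k * q - (1 + exp u) * exp q))" for q u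
  have Fint: "integrable (lborel \<Otimes>\<^sub>M lborel) (case_prod F)"
    unfolding F_def using integrable_Beta_log_kernel[OF z zk] by simp
  have inner_q: "(LINT q|lborel. F q u) = of_real (Gamma k) * (exp (z * of_real u) * of_real ((1 + exp u) powr (- k)))" for u
  proof -
    have "(LINT q|lborel. exp (k * q - (1 + exp u) * exp q)) = Gamma k * (1 + exp u) powr (- k)"
      using Gamma_log_integral_scaled_real(2)[OF k, of "1 + exp u"] by (simp add: powr_def)
    then show ?thesis by (simp add: F_def)
  qed
  have inner_u: "(LINT u|lborel. F q u) = Gamma z * exp ((of_real k - z) * of_real q - of_real (exp q))" for q
  proof -
    have "F q u = of_real (exp (k * q - exp q)) * exp (z * of_real u - of_real (exp q * exp u))" for u
      by (simp add: F_def exp_add[symmetric] exp_diff[symmetric] exp_of_real[symmetric] algebra_simps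
          del: exp_of_real)
    then have "(LINT u|lborel. F q u) = of_real (exp (k * q - exp q)) * (Gamma z * exp (- z * of_real (ln (exp q))))"
      using Gamma_log_integral_scaled(2)[OF z, of "exp q"] by simp
    then show ?thesis
      by (simp add: exp_add[symmetric] exp_diff[symmetric] exp_of_real[symmetric] algebra_simps
          del: exp_of_real)
  qed
  have "integrable lborel (\<lambda>u. inverse (of_real (Gamma k)) * (LINT q|lborel. F q u))"
    by (intro Bochner_Integration.integrable_mult_right lborel_pair.integrable_snd[OF Fint])
  then show "integrable lborel (\<lambda>u. exp (z * of_real u) * of_real ((1 + exp u) powr (- k)))"
    using Gk by (simp add: inner_q field_simps)
  have "of_real (Gamma k) * (LINT u|lborel. exp (z * of_real u) * of_real ((1 + exp u) powr (- k)))
        = (LINT u|lborel. LINT q|lborel. F q u)"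
    by (simp add: inner_q)
  also have "\<dots> = (LINT q|lborel. LINT u|lborel. F q u)"
    by (rule lborel_pair.Fubini_integral[OF Fint])
  also have "\<dots> = Gamma z * Gamma (of_real k - z)"
    unfolding inner_u using Gamma_log_integral(2)[of "of_real k - z"] zk by simp
  finally show "(LINT u|lborel. exp (z * of_real u) * of_real ((1 + exp u) powr (- k))) = Beta z (of_real k - z)"
    using Gk by (simp add: Beta_def Gamma_complex_of_real field_simps)
qed

lemma integrable_Beta_log_real:
  fixes x k :: real
  assumes "0 < x" "x < k"
  shows "integrable lborel (\<lambda>u. exp (x * u) * (1 + exp u) powr (- k))"
proof -
  have "Re (complex_of_real x) > 0" "Re (complex_of_real x) < k"
    using assms by simp_all
  from integrable_Re[OF Beta_log_integral(1)[OF this]] show ?thesis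
    by (simp add: exp_of_real flip: of_real_mult)
qed

lemma integrable_std_normal_density: "integrable lborel std_normal_density"
  and integral_std_normal_density: "(LINT x|lborel. std_normal_density x) = 1"
  using std_normal_moment_even[of 0]
  by (auto dest: has_bochner_integral_integrable has_bochner_integral_integral_eq)

lemma integrable_gaussian:
  fixes s :: real
  assumes s: "s > 0"
  shows "integrable lborel (\<lambda>t. exp (- (s * t)\<^sup>2 / 2))"
proof -
  have "integrable lborel (\<lambda>t. sqrt (2 * pi) * std_normal_density (0 + s * t))"
    using lborel_integrable_real_affine[OF integrable_std_normal_density, of s 0] s
    by (intro Bochner_Integration.integrable_mult_right) auto
  then show ?thesis by (simp add: std_normal_density_def)
qed

lemma fourier_transform_gaussian:
  fixes s y :: real
  assumes s: "s > 0"
  shows "(CLINT t|lborel. iexp (t * y) * of_real (exp (- (s * t)\<^sup>2 / 2)))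
         = of_real (sqrt (2 * pi) / s * exp (- (y / s)\<^sup>2 / 2))"
proof -
  have "of_real (exp (- (y / s)\<^sup>2 / 2)) = char std_normal_distribution (y / s)"
    by (simp add: char_std_normal_distribution)
  also have "\<dots> = (CLINT x|lborel. std_normal_density x *\<^sub>R iexp (y / s * x))"
    unfolding char_def by (subst integral_density) auto
  also have "\<dots> = s *\<^sub>R (CLINT t|lborel. std_normal_density (0 + s * t) *\<^sub>R iexp (y / s * (0 + s * t)))"
    using lborel_integral_real_affine[of s "\<lambda>x. std_normal_density x *\<^sub>R iexp (y / s * x)" 0] s
    by simp
  also have "\<dots> = (s / sqrt (2 * pi)) *\<^sub>R (CLINT t|lborel. iexp (t * y) * of_real (exp (- (s * t)\<^sup>2 / 2)))"
  proof -
    have "std_normal_density (0 + s * t) *\<^sub>R iexp (y / s * (0 + s * t)) =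
          of_real (1 / sqrt (2 * pi)) * (iexp (t * y) * of_real (exp (- (s * t)\<^sup>2 / 2)))" for t
    proof -
      have "y / s * (0 + s * t) = t * y" using s by simp
      then show ?thesis
        by (simp only: std_normal_density_def scaleR_conv_of_real of_real_mult) (simp add: mult_ac)
    qed
    then show ?thesis
      by (simp only: integral_mult_right_zero) (simp add: scaleR_conv_of_real)
  qed
  finally show ?thesis
    using s by (simp add: scaleR_conv_of_real field_simps)
qed

lemma integral_gaussian_kernel_rescale:
  fixes h :: "real \<Rightarrow> real" and x0 s :: real
  assumes s: "s > 0"
  shows "(LINT u|lborel. h u * (sqrt (2 * pi) / s * exp (- ((u - x0) / s)\<^sup>2 / 2)))
       = 2 * pi * (LINT z|lborel. h (x0 + s * z) * std_normal_density z)"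
proof -
  have "\<bar>s\<bar> *\<^sub>R (h (x0 + s * z) * (sqrt (2 * pi) / s * exp (- ((x0 + s * z - x0) / s)\<^sup>2 / 2)))
      = 2 * pi * (h (x0 + s * z) * std_normal_density z)" for z
  proof -
    have "sqrt (2 * pi) * sqrt (2 * pi) = 2 * pi" by simp
    then show ?thesis using s by (simp add: std_normal_density_def field_simps)
  qed
  moreover have "(LINT u|lborel. h u * (sqrt (2 * pi) / s * exp (- ((u - x0) / s)\<^sup>2 / 2)))
      = \<bar>s\<bar> *\<^sub>R (LINT z|lborel. h (x0 + s * z) * (sqrt (2 * pi) / s * exp (- ((x0 + s * z - x0) / s)\<^sup>2 / 2)))"
    using s by (intro lborel_integral_real_affine) simp
  ultimately show ?thesis
    by (simp only: integral_scaleR_right[symmetric]) simp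
qed

text \<open>Gauss--Weierstrass summation: damping the transform by a Gaussian of width \<open>1 / s\<close> turns
  the inversion integral into an average of \<open>h\<close> against a Gaussian of width \<open>s\<close>.\<close>
lemma fourier_inversion_gaussian_damped:
  fixes h :: "real \<Rightarrow> real" and x0 s :: real
  assumes h: "integrable lborel h" and s: "s > 0"
  shows "(CLINT t|lborel. (CLINT u|lborel. of_real (h u) * iexp (t * u)) * iexp (- (t * x0))
            * of_real (exp (- (s * t)\<^sup>2 / 2)))
         = of_real (2 * pi * (LINT z|lborel. h (x0 + s * z) * std_normal_density z))"
proof -
  have [measurable]: "h \<in> borel_measurable borel"
    using borel_measurable_integrable[OF h] by simp
  define F where "F t u = of_real (h u) * iexp (t * (u - x0)) * of_real (exp (- (s * t)\<^sup>2 / 2))" for t u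
  have Fm: "case_prod F \<in> borel_measurable (lborel \<Otimes>\<^sub>M lborel)"
    unfolding F_def by measurable
  have bound: "norm (F t u) \<le> exp (- (s * t)\<^sup>2 / 2) * \<bar>h u\<bar>" for t u
    by (simp add: F_def norm_mult)
  note swap = Fubini_integral_product_bound(2)[OF Fm bound integrable_gaussian[OF s] integrable_abs[OF h]]
  have inner_u: "(LINT u|lborel. F t u)
      = (CLINT u|lborel. of_real (h u) * iexp (t * u)) * iexp (- (t * x0)) * of_real (exp (- (s * t)\<^sup>2 / 2))" for t
  proof -
    have "iexp (t * (u - x0)) = iexp (t * u) * iexp (- (t * x0))" for u
      by (simp add: algebra_simps flip: exp_add)
    then have "F t u = of_real (h u) * iexp (t * u) * (iexp (- (t * x0)) * of_real (exp (- (s * t)\<^sup>2 / 2)))" for u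
      unfolding F_def by (simp only: mult_ac)
    then have "(LINT u|lborel. F t u) = (CLINT u|lborel. of_real (h u) * iexp (t * u))
        * (iexp (- (t * x0)) * of_real (exp (- (s * t)\<^sup>2 / 2)))"
      by (simp only: integral_mult_left_zero)
    then show ?thesis
      by (simp only: mult.assoc)
  qed
  have inner_t: "(LINT t|lborel. F t u) = of_real (h u * (sqrt (2 * pi) / s * exp (- ((u - x0) / s)\<^sup>2 / 2)))" for u
  proof -
    have "(LINT t|lborel. F t u)
        = of_real (h u) * (CLINT t|lborel. iexp (t * (u - x0)) * of_real (exp (- (s * t)\<^sup>2 / 2)))"
      by (simp add: F_def mult.assoc)
    then show ?thesis by (simp only: fourier_transform_gaussian[OF s]) simp
  qed
  have "(LINT t|lborel. LINT u|lborel. F t u) = (LINT u|lborel. LINT t|lborel. F t u)"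
    by (rule swap)
  also have "\<dots> = of_real (LINT u|lborel. h u * (sqrt (2 * pi) / s * exp (- ((u - x0) / s)\<^sup>2 / 2)))"
    by (simp only: inner_t integral_complex_of_real)
  also have "\<dots> = of_real (2 * pi * (LINT z|lborel. h (x0 + s * z) * std_normal_density z))"
    by (simp only: integral_gaussian_kernel_rescale[OF s])
  finally show ?thesis by (simp add: inner_u)
qed

lemma gaussian_average_tendsto:
  fixes h :: "real \<Rightarrow> real" and s :: "nat \<Rightarrow> real"
  assumes [measurable]: "h \<in> borel_measurable borel"
    and bounded: "\<And>u. \<bar>h u\<bar> \<le> B" and cont: "isCont h x0" and s: "s \<longlonglongrightarrow> 0"
  shows "(\<lambda>n. LINT z|lborel. h (x0 + s n * z) * std_normal_density z) \<longlonglongrightarrow> h x0"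
proof -
  have "(\<lambda>n. LINT z|lborel. h (x0 + s n * z) * std_normal_density z)
        \<longlonglongrightarrow> (LINT z|lborel. h x0 * std_normal_density z)"
  proof (rule integral_dominated_convergence[where w = "\<lambda>z. B * std_normal_density z"])
    show "integrable lborel (\<lambda>z. B * std_normal_density z)"
      using integrable_std_normal_density by simp
    show "AE z in lborel. (\<lambda>n. h (x0 + s n * z) * std_normal_density z) \<longlonglongrightarrow> h x0 * std_normal_density z"
    proof (rule AE_I2)
      fix z
      have "(\<lambda>n. x0 + s n * z) \<longlonglongrightarrow> x0 + 0 * z"
        by (intro tendsto_intros s)
      then have "(\<lambda>n. h (x0 + s n * z)) \<longlonglongrightarrow> h x0"
        using isCont_tendsto_compose[OF cont] by simp
      then show "(\<lambda>n. h (x0 + s n * z) * std_normal_density z) \<longlonglongrightarrow> h x0 * std_normal_density z"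
        by (rule tendsto_mult_right)
    qed
    show "AE z in lborel. norm (h (x0 + s n * z) * std_normal_density z) \<le> B * std_normal_density z" for n
      using bounded by (auto simp: abs_mult intro!: mult_right_mono)
  qed simp_all
  then show ?thesis
    by (simp add: integral_std_normal_density)
qed

lemma fourier_inversion_at_continuity_point:
  fixes h :: "real \<Rightarrow> real" and x0 B :: real
  assumes h: "integrable lborel h" and bounded: "\<And>u. \<bar>h u\<bar> \<le> B" and cont: "isCont h x0"
    and transform: "integrable lborel (\<lambda>t. CLINT u|lborel. of_real (h u) * iexp (t * u))"
  shows "(CLINT t|lborel. (CLINT u|lborel. of_real (h u) * iexp (t * u)) * iexp (- (t * x0)))
         = of_real (2 * pi * h x0)"
proof -
  define \<phi> where "\<phi> t = (CLINT u|lborel. of_real (h u) * iexp (t * u))" for t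
  have [measurable]: "h \<in> borel_measurable borel"
    using borel_measurable_integrable[OF h] by simp
  have [measurable]: "\<phi> \<in> borel_measurable borel"
    using borel_measurable_integrable[OF transform] by (simp add: \<phi>_def[abs_def])
  define s where "s n = 1 / real (Suc n)" for n
  have s_pos: "s n > 0" for n
    by (simp add: s_def)
  have s_lim: "s \<longlonglongrightarrow> 0"
    unfolding s_def by (rule LIMSEQ_inverse_real_of_nat[unfolded inverse_eq_divide])
  have damped_lim: "(\<lambda>n. CLINT t|lborel. \<phi> t * iexp (- (t * x0)) * of_real (exp (- (s n * t)\<^sup>2 / 2)))
        \<longlonglongrightarrow> (CLINT t|lborel. \<phi> t * iexp (- (t * x0)))"
  proof (rule integral_dominated_convergence[where w = "\<lambda>t. norm (\<phi> t)"])
    show "integrable lborel (\<lambda>t. norm (\<phi> t))"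
      using transform by (simp add: \<phi>_def[abs_def])
    show "AE t in lborel. (\<lambda>n. \<phi> t * iexp (- (t * x0)) * of_real (exp (- (s n * t)\<^sup>2 / 2)))
            \<longlonglongrightarrow> \<phi> t * iexp (- (t * x0))"
    proof (rule AE_I2)
      fix t
      have "(\<lambda>n. exp (- (s n * t)\<^sup>2 / 2)) \<longlonglongrightarrow> exp (- (0 * t)\<^sup>2 / 2)"
        by (intro tendsto_intros s_lim) simp
      from tendsto_mult_left[OF tendsto_of_real[OF this], of "\<phi> t * iexp (- (t * x0))"]
      show "(\<lambda>n. \<phi> t * iexp (- (t * x0)) * of_real (exp (- (s n * t)\<^sup>2 / 2)))
            \<longlonglongrightarrow> \<phi> t * iexp (- (t * x0))"
        by simp
    qed
    show "AE t in lborel. norm (\<phi> t * iexp (- (t * x0)) * of_real (exp (- (s n * t)\<^sup>2 / 2))) \<le> norm (\<phi> t)" for n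
      by (simp add: norm_mult mult_left_le)
  qed simp_all
  have average_lim: "(\<lambda>n. LINT z|lborel. h (x0 + s n * z) * std_normal_density z) \<longlonglongrightarrow> h x0"
    by (rule gaussian_average_tendsto[OF _ bounded cont s_lim]) measurable
  have "(\<lambda>n. CLINT t|lborel. \<phi> t * iexp (- (t * x0)) * of_real (exp (- (s n * t)\<^sup>2 / 2)))
        \<longlonglongrightarrow> of_real (2 * pi * h x0)"
    unfolding \<phi>_def fourier_inversion_gaussian_damped[OF h s_pos]
    by (intro tendsto_of_real tendsto_mult_left average_lim)
  with damped_lim show ?thesis
    unfolding \<phi>_def by (rule LIMSEQ_unique)
qed

lemma halfline_integrable_exp:
  fixes x :: real
  assumes x: "x > 0"
  shows "set_integrable lborel {..<0} (\<lambda>v. exp (x * v))"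
proof -
  have "set_integrable lborel (einterval (-\<infinity>) (ereal 0)) (\<lambda>v. exp (x * v))"
  proof (rule interval_integral_FTC_nonneg(1)[where F = "\<lambda>v. exp (x * v) / x" and A = 0 and B = "1 / x"])
    show "((\<lambda>v. exp (x * v) / x) has_real_derivative exp (x * t)) (at t)" for t
      using x by (auto intro!: derivative_eq_intros)
    have "((\<lambda>v. exp (x * v) / x) \<longlongrightarrow> 0 / x) at_bot"
      using x by (intro tendsto_intros)
        (auto intro!: exp_at_bot[THEN filterlim_compose] filterlim_tendsto_pos_mult_at_bot filterlim_ident)
    then show "(((\<lambda>v. exp (x * v) / x) \<circ> real_of_ereal) \<longlongrightarrow> 0) (at_right (- \<infinity>))"
      unfolding ereal_tendsto_simps by simp
    have "((\<lambda>v. exp (x * v) / x) \<longlongrightarrow> exp (x * 0) / x) (at_left 0)"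
      using x by (intro tendsto_intros) simp
    then show "(((\<lambda>v. exp (x * v) / x) \<circ> real_of_ereal) \<longlongrightarrow> 1 / x) (at_left (ereal 0))"
      unfolding ereal_tendsto_simps by simp
  qed simp_all
  then show ?thesis by simp
qed

lemma halfline_integral_exp_complex:
  fixes w :: complex
  assumes w: "Re w > 0"
  shows "set_integrable lborel {..<0} (\<lambda>v. exp (w * of_real v))"
    and "(LBINT v:{..<0}. exp (w * of_real v)) = 1 / w"
proof -
  have w0: "w \<noteq> 0" using w by auto
  show int: "set_integrable lborel {..<0} (\<lambda>v. exp (w * of_real v))"
    unfolding set_integrable_def
  proof (rule Bochner_Integration.integrable_bound[OF halfline_integrable_exp[OF w, unfolded set_integrable_def]])
    show "(\<lambda>v. indicat_real {..<0} v *\<^sub>R exp (w * complex_of_real v)) \<in> borel_measurable lborel"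
      by measurable
    show "AE v in lborel. norm (indicat_real {..<0} v *\<^sub>R exp (w * complex_of_real v))
                          \<le> norm (indicat_real {..<0} v *\<^sub>R exp (Re w * v))"
      by (auto simp: norm_exp_eq_Re indicator_def)
  qed
  have "(LBINT v=-\<infinity>..ereal 0. exp (w * of_real v)) = 1 / w - 0"
  proof (rule interval_integral_FTC_integrable[where F = "\<lambda>v. exp (w * of_real v) / w"])
    show "((\<lambda>v. exp (w * of_real v) / w) has_vector_derivative exp (w * of_real t)) (at t)" for t
    proof -
      have "((\<lambda>z. exp (w * z) / w) has_field_derivative exp (w * of_real t)) (at (of_real t))"
        using w0 by (auto intro!: derivative_eq_intros)
      then show ?thesis by (rule has_vector_derivative_real_field)
    qed
    show "isCont (\<lambda>v. exp (w * of_real v)) t" for t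
      by (intro continuous_intros)
    show "set_integrable lborel (einterval (- \<infinity>) (ereal 0)) (\<lambda>v. exp (w * complex_of_real v))"
      using int by simp
    have "((\<lambda>v. norm (exp (w * of_real v) / w)) \<longlongrightarrow> 0) at_bot"
    proof -
      have "((\<lambda>v. exp (Re w * v) / norm w) \<longlongrightarrow> 0 / norm w) at_bot"
        using w by (intro tendsto_intros)
          (auto intro!: exp_at_bot[THEN filterlim_compose] filterlim_tendsto_pos_mult_at_bot filterlim_ident)
      then show ?thesis by (simp add: norm_divide norm_exp_eq_Re)
    qed
    then have "((\<lambda>v. exp (w * of_real v) / w) \<longlongrightarrow> 0) at_bot"
      by (rule tendsto_norm_zero_cancel)
    then show "(((\<lambda>v. exp (w * of_real v) / w) \<circ> real_of_ereal) \<longlongrightarrow> 0) (at_right (- \<infinity>))"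
      unfolding ereal_tendsto_simps by simp
    have "((\<lambda>v. exp (w * of_real v) / w) \<longlongrightarrow> exp (w * of_real 0) / w) (at_left 0)"
      using w0 by (intro tendsto_intros)
    then show "(((\<lambda>v. exp (w * of_real v) / w) \<circ> real_of_ereal) \<longlongrightarrow> 1 / w) (at_left (ereal 0))"
      unfolding ereal_tendsto_simps using w0 by simp
  qed simp
  then show "(LBINT v:{..<0}. exp (w * of_real v)) = 1 / w"
    by (simp add: interval_lebesgue_integral_le_eq)
qed

lemma halfline_integral_logistic:
  fixes z :: real
  shows "(LBINT v:{..<0}. 1 / (1 + exp (z - v))) = ln (1 + exp (- z))"
proof -
  let ?F = "\<lambda>v. ln (exp v + exp z)"
  have "(?F has_real_derivative 1 / (1 + exp (z - t))) (at t)" for t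
  proof -
    have "(?F has_real_derivative exp t / (exp t + exp z)) (at t)"
      by (auto intro!: derivative_eq_intros simp: add_pos_pos)
    moreover have "exp t / (exp t + exp z) = 1 / (1 + exp (z - t))"
      by (simp add: exp_diff field_simps add_pos_pos)
    ultimately show ?thesis by simp
  qed
  moreover have "isCont (\<lambda>v. 1 / (1 + exp (z - v))) t" for t
    by (intro continuous_intros) simp
  moreover have "AE t in lborel. - \<infinity> < ereal t \<longrightarrow> ereal t < ereal 0 \<longrightarrow> 0 \<le> 1 / (1 + exp (z - t))"
    by (simp add: add_pos_pos less_imp_le)
  moreover have "(?F \<longlongrightarrow> ln (0 + exp z)) at_bot"
    by (intro tendsto_intros exp_at_bot) simp
  then have "((?F \<circ> real_of_ereal) \<longlongrightarrow> z) (at_right (- \<infinity>))"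
    unfolding ereal_tendsto_simps by simp
  moreover have "(?F \<longlongrightarrow> ln (exp 0 + exp z)) (at_left 0)"
    by (intro tendsto_intros) simp
  then have "((?F \<circ> real_of_ereal) \<longlongrightarrow> ln (1 + exp z)) (at_left (ereal 0))"
    unfolding ereal_tendsto_simps by simp
  ultimately have "(LBINT v=-\<infinity>..ereal 0. 1 / (1 + exp (z - v))) = ln (1 + exp z) - z"
    by (intro interval_integral_FTC_nonneg(2)) simp_all
  also have "ln (1 + exp z) - z = ln (1 + exp (- z))"
  proof -
    have "ln (1 + exp z) - z = ln ((1 + exp z) / exp z)"
      by (simp add: ln_div)
    also have "(1 + exp z) / exp z = 1 + exp (- z)"
      by (simp add: field_simps exp_minus)
    finally show ?thesis .
  qed
  finally show ?thesis
    by (simp add: interval_lebesgue_integral_le_eq)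
qed

lemma Re_pos_imp_not_nonpos_Ints: "Re z > 0 \<Longrightarrow> z \<notin> \<int>\<^sub>\<le>\<^sub>0"
  by (auto elim!: nonpos_Ints_cases)

lemma Beta_one_plus_minus: "Beta (1 + s) (- s) = Gamma (1 + s) * Gamma (- s :: complex)"
  by (simp add: Beta_def)

lemma exp_Complex_times_of_real: "exp (Complex a t * of_real u) = of_real (exp (a * u)) * iexp (t * u)"
proof -
  have "Complex a t * of_real u = of_real (a * u) + \<i> * of_real (t * u)"
    by (simp add: complex_eq_iff)
  then show ?thesis by (simp only: exp_add exp_of_real)
qed

lemma Complex_measurable [measurable]: "Complex c \<in> borel_measurable borel"
proof -
  have "Complex c = (\<lambda>t. of_real c + \<i> * of_real t)"
    by (auto simp: complex_eq_iff)
  then show ?thesis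
    by (simp add: borel_measurable_continuous_onI continuous_intros)
qed

lemma Beta_vertical_fourier:
  assumes c: "-1 < c" "c < 0"
  shows "integrable lborel (\<lambda>u. of_real (exp ((1 + c) * u) / (1 + exp u)) * iexp (t * u))"
    and "Beta (1 + Complex c t) (- Complex c t)
           = (CLINT u|lborel. of_real (exp ((1 + c) * u) / (1 + exp u)) * iexp (t * u))"
proof -
  let ?z = "Complex (1 + c) t"
  have "Re ?z > 0" "Re ?z < 1" using c by auto
  note B = Beta_log_integral[OF this]
  have integrand: "exp (?z * of_real u) * of_real ((1 + exp u) powr (- 1))
      = of_real (exp ((1 + c) * u) / (1 + exp u)) * iexp (t * u)" for u
    by (simp add: exp_Complex_times_of_real powr_minus_divide)
  show "integrable lborel (\<lambda>u. of_real (exp ((1 + c) * u) / (1 + exp u)) * iexp (t * u))"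
    using B(1) unfolding integrand .
  have "1 + Complex c t = ?z" "- Complex c t = complex_of_real 1 - ?z"
    by (simp_all add: complex_eq_iff)
  then show "Beta (1 + Complex c t) (- Complex c t)
           = (CLINT u|lborel. of_real (exp ((1 + c) * u) / (1 + exp u)) * iexp (t * u))"
    using B(2) unfolding integrand by simp
qed

lemma exp_plus_exp_minus_ge: "(exp (y::real) + exp (- y)) / 2 \<ge> (1 + y\<^sup>2) / 4"
proof -
  have "exp \<bar>y\<bar> \<ge> 1 + \<bar>y\<bar> + \<bar>y\<bar>\<^sup>2 / 2"
    by (rule exp_lower_Taylor_quadratic) simp
  moreover have "exp y + exp (- y) \<ge> exp \<bar>y\<bar>"
    by (cases "y \<ge> 0") (auto simp: add_increasing add_increasing2)
  ultimately show ?thesis by (simp add: power2_abs)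
qed

text \<open>The reflection formula \<open>B(1 + s, -s) = -\<pi> / sin (\<pi> s)\<close> gives exponential decay along
  vertical lines; quadratic decay suffices here.\<close>
lemma norm_Beta_vertical_le:
  assumes c: "-1 < c" "c < 0"
  shows "norm (Beta (1 + Complex c t) (- Complex c t)) \<le> 4 * pi / \<bar>sin (pi * c)\<bar> * inverse (1 + t\<^sup>2)"
proof -
  let ?w = "of_real pi * (- Complex c t)"
  have reflection: "Beta (1 + Complex c t) (- Complex c t) = of_real pi / sin ?w"
    using Gamma_reflection_complex[of "- Complex c t"] by (simp add: Beta_one_plus_minus mult.commute)
  have "0 < pi * (1 + c)"
    using c by simp
  then have "sin (- (pi * c)) > 0"
    using c by (intro sin_gt_zero) (simp_all add: mult_pos_neg algebra_simps)
  then have sin_pos: "\<bar>sin (pi * c)\<bar> > 0"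
    by simp
  have "1 \<le> pi\<^sup>2"
    using pi_gt3 by (intro one_le_power) simp
  from mult_right_mono[OF this, of "t\<^sup>2"] have "1 + t\<^sup>2 \<le> 1 + (pi * t)\<^sup>2"
    by (simp add: power_mult_distrib)
  also have "\<dots> \<le> 4 * ((exp (pi * t) + exp (- (pi * t))) / 2)"
    using exp_plus_exp_minus_ge[of "pi * t"] by simp
  finally have "\<bar>sin (pi * c)\<bar> * ((1 + t\<^sup>2) / 4)
      \<le> \<bar>sin (pi * c)\<bar> * ((exp (pi * t) + exp (- (pi * t))) / 2)"
    by (intro mult_left_mono) simp_all
  also have "\<dots> = \<bar>Re (sin ?w)\<bar>"
    by (simp add: Re_sin abs_mult add.commute)
  also have "\<dots> \<le> norm (sin ?w)"
    by (rule abs_Re_le_cmod)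
  finally have sin_ge: "\<bar>sin (pi * c)\<bar> * ((1 + t\<^sup>2) / 4) \<le> norm (sin ?w)" .
  have "norm (Beta (1 + Complex c t) (- Complex c t)) = pi / norm (sin ?w)"
    by (simp add: reflection norm_divide)
  also have "\<dots> \<le> pi / (\<bar>sin (pi * c)\<bar> * ((1 + t\<^sup>2) / 4))"
  proof (rule divide_left_mono[OF sin_ge])
    have pos: "\<bar>sin (pi * c)\<bar> * ((1 + t\<^sup>2) / 4) > 0"
      using sin_pos by (simp add: add_pos_nonneg)
    show "0 < norm (sin ?w) * (\<bar>sin (pi * c)\<bar> * ((1 + t\<^sup>2) / 4))"
      by (intro mult_pos_pos order.strict_trans2[OF pos sin_ge] pos)
  qed simp
  also have "\<dots> = 4 * pi / \<bar>sin (pi * c)\<bar> * inverse (1 + t\<^sup>2)"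
    by (simp add: field_simps)
  finally show ?thesis .
qed

lemma continuous_on_Beta_vertical:
  assumes c: "-1 < c" "c < 0"
  shows "continuous_on UNIV (\<lambda>t. Beta (1 + Complex c t) (- Complex c t))"
proof -
  have Complex_eq: "Complex c = (\<lambda>t. of_real c + \<i> * of_real t)"
    by (auto simp: complex_eq_iff)
  show ?thesis
    unfolding Beta_one_plus_minus Complex_eq
    by (intro continuous_at_imp_continuous_on ballI continuous_intros Re_pos_imp_not_nonpos_Ints)
      (use c in simp_all)
qed

lemma integrable_Beta_vertical:
  assumes c: "-1 < c" "c < 0"
  shows "integrable lborel (\<lambda>t. Beta (1 + Complex c t) (- Complex c t))"
proof -
  have "integrable lborel (\<lambda>t::real. inverse (1 + t\<^sup>2))"
    using integrable_inverse_1_plus_square unfolding set_integrable_def einterval_eq_UNIV by simp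
  then have "integrable lborel (\<lambda>t. 4 * pi / \<bar>sin (pi * c)\<bar> * inverse (1 + t\<^sup>2))"
    by simp
  then show ?thesis
  proof (rule Bochner_Integration.integrable_bound)
    show "(\<lambda>t. Beta (1 + Complex c t) (- Complex c t)) \<in> borel_measurable lborel"
      using borel_measurable_continuous_onI[OF continuous_on_Beta_vertical[OF c]] by simp
    show "AE t in lborel. norm (Beta (1 + Complex c t) (- Complex c t))
                          \<le> norm (4 * pi / \<bar>sin (pi * c)\<bar> * inverse (1 + t\<^sup>2))"
      by (intro AE_I2 order_trans[OF norm_Beta_vertical_le[OF c]]) simp
  qed
qed

lemma exp_le_one_plus_exp:
  fixes c u :: real
  assumes c: "-1 < c" "c < 0"
  shows "exp ((1 + c) * u) \<le> 1 + exp u"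
proof (cases "u \<ge> 0")
  case True
  then have "(1 + c) * u \<le> 1 * u"
    using c by (intro mult_right_mono) simp_all
  then show ?thesis
    using exp_gt_zero[of 0] by (simp add: add_increasing)
next
  case False
  then have "(1 + c) * u \<le> 0"
    using c by (intro mult_nonneg_nonpos) simp_all
  then have "exp ((1 + c) * u) \<le> 1"
    by simp
  then show ?thesis
    using exp_gt_zero[of u] by linarith
qed

lemma Beta_vertical_inversion:
  assumes c: "-1 < c" "c < 0"
  shows "(CLINT t|lborel. Beta (1 + Complex c t) (- Complex c t) * exp (Complex c t * of_real \<xi>))
         = of_real (2 * pi / (1 + exp \<xi>))"
proof -
  define h where "h u = exp ((1 + c) * u) / (1 + exp u)" for u
  have h_int: "integrable lborel h"
    using integrable_Beta_log_real[of "1 + c" 1] c by (simp add: h_def[abs_def] powr_minus_divide)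
  have h_bound: "\<bar>h u\<bar> \<le> 1" for u
    using exp_le_one_plus_exp[OF c] by (simp add: h_def)
  have h_cont: "isCont h x" for x
    unfolding h_def by (intro continuous_intros) simp
  have transform: "(CLINT u|lborel. of_real (h u) * iexp (t * u)) = Beta (1 + Complex c t) (- Complex c t)" for t
    using Beta_vertical_fourier(2)[OF c] by (simp add: h_def)
  have "integrable lborel (\<lambda>t. CLINT u|lborel. of_real (h u) * iexp (t * u))"
    using integrable_Beta_vertical[OF c] by (simp only: transform)
  from fourier_inversion_at_continuity_point[OF h_int h_bound h_cont[of "- \<xi>"] this]
  have inversion: "(CLINT t|lborel. Beta (1 + Complex c t) (- Complex c t) * iexp (- (t * - \<xi>)))
      = of_real (2 * pi * h (- \<xi>))"
    by (simp only: transform)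
  have "Beta (1 + Complex c t) (- Complex c t) * exp (Complex c t * of_real \<xi>)
      = of_real (exp (c * \<xi>)) * (Beta (1 + Complex c t) (- Complex c t) * iexp (- (t * - \<xi>)))" for t
    by (simp add: exp_Complex_times_of_real)
  then have "(CLINT t|lborel. Beta (1 + Complex c t) (- Complex c t) * exp (Complex c t * of_real \<xi>))
      = of_real (exp (c * \<xi>) * (2 * pi * h (- \<xi>)))"
    by (simp only: integral_mult_right_zero inversion of_real_mult)
  also have "exp (c * \<xi>) * (2 * pi * h (- \<xi>)) = 2 * pi / (1 + exp \<xi>)"
  proof -
    have "exp (c * \<xi>) * exp ((1 + c) * - \<xi>) = exp (- \<xi>)"
      by (simp add: exp_add[symmetric] algebra_simps)
    moreover have "exp (- \<xi>) / (1 + exp (- \<xi>)) = 1 / (1 + exp \<xi>)"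
      by (simp add: exp_minus field_simps)
    ultimately show ?thesis
      by (simp add: h_def field_simps)
  qed
  finally show ?thesis .
qed

text \<open>Write \<open>1 / (-s)\<close> as the integral of \<open>e^(-s v)\<close> over \<open>v < 0\<close> and exchange the order of
  integration.\<close>
lemma Beta_vertical_div_exchange:
  assumes c: "-1 < c" "c < 0"
  shows "(CLINT t|lborel. Beta (1 + Complex c t) (- Complex c t) / (- Complex c t) * exp (Complex c t * of_real \<xi>))
       = (CLINT v|lborel. indicator {..<0} v *\<^sub>R
            (CLINT t|lborel. Beta (1 + Complex c t) (- Complex c t) * exp (Complex c t * of_real (\<xi> - v))))"
proof -
  let ?B = "\<lambda>t. Beta (1 + Complex c t) (- Complex c t)"
  have [measurable]: "?B \<in> borel_measurable borel"
    using borel_measurable_continuous_onI[OF continuous_on_Beta_vertical[OF c]] by simp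
  define F where "F t v = ?B t * (indicator {..<0} v *\<^sub>R exp (Complex c t * of_real (\<xi> - v)))" for t v
  have Fm: "case_prod F \<in> borel_measurable (lborel \<Otimes>\<^sub>M lborel)"
    unfolding F_def by measurable
  have inner_v: "?B t / (- Complex c t) * exp (Complex c t * of_real \<xi>) = (CLINT v|lborel. F t v)" for t
  proof -
    have "Re (- Complex c t) > 0"
      using c by simp
    from halfline_integral_exp_complex(2)[OF this]
    have div: "1 / (- Complex c t) = (CLINT v|lborel. indicator {..<0} v *\<^sub>R exp ((- Complex c t) * of_real v))"
      by (simp add: set_lebesgue_integral_def)
    have integrand: "?B t * (indicator {..<0} v *\<^sub>R exp ((- Complex c t) * of_real v)) * exp (Complex c t * of_real \<xi>)
        = F t v" for v
      by (simp add: F_def exp_add[symmetric] algebra_simps)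
    have "?B t / (- Complex c t) * exp (Complex c t * of_real \<xi>)
        = ?B t * (1 / (- Complex c t)) * exp (Complex c t * of_real \<xi>)"
      by simp
    also have "\<dots> = (CLINT v|lborel. ?B t * (indicator {..<0} v *\<^sub>R exp ((- Complex c t) * of_real v))
        * exp (Complex c t * of_real \<xi>))"
      unfolding div by (simp only: integral_mult_right_zero integral_mult_left_zero)
    finally show ?thesis
      by (simp only: integrand)
  qed
  have "norm (F t v) \<le> (norm (?B t) * exp (c * \<xi>)) * (indicator {..<0} v * exp (- c * v))" for t v
  proof -
    have "exp (c * (\<xi> - v)) = exp (c * \<xi>) * exp (- c * v)"
      by (simp add: exp_add[symmetric] algebra_simps)
    then show ?thesis
      by (simp add: F_def norm_mult norm_exp_eq_Re indicator_def)
  qed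
  moreover have "integrable lborel (\<lambda>t. norm (?B t) * exp (c * \<xi>))"
    using integrable_Beta_vertical[OF c] by (intro Bochner_Integration.integrable_mult_left integrable_norm)
  moreover have "integrable lborel (\<lambda>v. indicator {..<0} v * exp (- c * v))"
    using halfline_integrable_exp[of "- c"] c by (simp add: set_integrable_def)
  ultimately have "(CLINT t|lborel. CLINT v|lborel. F t v) = (CLINT v|lborel. CLINT t|lborel. F t v)"
    by (rule Fubini_integral_product_bound(2)[OF Fm])
  then show ?thesis
    by (simp only: inner_v F_def mult_scaleR_right integral_scaleR_right)
qed

lemma Beta_vertical_div_inversion:
  assumes c: "-1 < c" "c < 0"
  shows "(CLINT t|lborel. Beta (1 + Complex c t) (- Complex c t) / (- Complex c t) * exp (Complex c t * of_real \<xi>))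
       = of_real (2 * pi * ln (1 + exp (- \<xi>)))"
proof -
  have "(CLINT t|lborel. Beta (1 + Complex c t) (- Complex c t) / (- Complex c t) * exp (Complex c t * of_real \<xi>))
      = of_real (2 * pi * (LINT v|lborel. indicator {..<0} v * (1 / (1 + exp (\<xi> - v)))))"
  proof -
    have integrand: "indicator {..<0} v *\<^sub>R of_real (2 * pi / (1 + exp (\<xi> - v)))
        = of_real (2 * pi * (indicator {..<0} v * (1 / (1 + exp (\<xi> - v)))))" for v :: real
      by (simp add: scaleR_conv_of_real indicator_def)
    show ?thesis
      unfolding Beta_vertical_div_exchange[OF c] Beta_vertical_inversion[OF c] integrand
      by (simp only: integral_complex_of_real integral_mult_right_zero)
  qed
  also have "(LINT v|lborel. indicator {..<0} v * (1 / (1 + exp (\<xi> - v)))) = ln (1 + exp (- \<xi>))"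
    using halfline_integral_logistic[of \<xi>] by (simp add: set_lebesgue_integral_def)
  finally show ?thesis .
qed

lemma meijerG_kernel_3_2_factorization:
  fixes kZ kW :: real and s :: complex
  assumes s: "-1 < Re s" "Re s < 0" and kZ: "kZ > 0" and kW: "kW > 0"
  shows "meijerG_kernel 3 2 [0, 1 - kW, 1] [0, 0, kZ] s
      = of_real (Gamma (kZ + kW)) * (Beta (1 + s) (- s) / (- s)) * Beta (of_real kZ - s) (of_real kW + s)"
proof -
  have "- s \<notin> \<int>\<^sub>\<le>\<^sub>0"
    using s by (intro Re_pos_imp_not_nonpos_Ints) simp
  then have Gamma_rGamma: "Gamma (- s) * rGamma (- s) = 1"
    by (simp add: Gamma_def rGamma_eq_zero_iff)
  have s0: "s \<noteq> 0"
    using s by auto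
  have "- s * rGamma (1 - s) = rGamma (- s)"
    using rGamma_plus1[of "- s"] by (simp add: add.commute)
  moreover have "- s \<noteq> 0"
    using s0 by simp
  ultimately have rGamma_shift: "rGamma (1 - s) = rGamma (- s) / (- s)"
    by (metis nonzero_mult_div_cancel_left)
  have "Gamma (of_real kZ - s) * Gamma (of_real kW + s)
      = of_real (Gamma (kZ + kW)) * Beta (of_real kZ - s) (of_real kW + s)"
  proof -
    have "of_real kZ - s + (of_real kW + s) = complex_of_real (kZ + kW)"
      by simp
    moreover have "Gamma (kZ + kW) \<noteq> 0"
      using kZ kW by (simp add: Gamma_real_pos less_imp_neq[symmetric])
    ultimately show ?thesis
      by (simp only: Beta_def Gamma_complex_of_real) simp
  qed
  moreover have "meijerG_kernel 3 2 [0, 1 - kW, 1] [0, 0, kZ] s =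
      Gamma (- s) * Gamma (- s) * Gamma (of_real kZ - s) * (Gamma (1 + s) * Gamma (of_real kW + s)) * rGamma (1 - s)"
    by (simp add: meijerG_kernel_def numeral_3_eq_3 numeral_2_eq_2 lessThan_Suc atLeastLessThanSuc algebra_simps)
  ultimately show ?thesis
    using Gamma_rGamma s0 unfolding rGamma_shift Beta_one_plus_minus
    by (simp add: field_simps)
qed

lemma meijerG_kernel_3_2_integral:
  fixes kZ kW a c t :: real
  assumes kZ: "kZ > 0" and kW: "kW > 0" and a: "a > 0" and c: "-1 < c" "-kW < c" "c < 0"
  shows "meijerG_kernel 3 2 [0, 1 - kW, 1] [0, 0, kZ] (Complex c t) * of_real a powr Complex c t
    = of_real (Gamma (kZ + kW)) *
      (CLINT z|lborel. of_real (exp (kZ * z) * (1 + exp z) powr - (kZ + kW)) *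
         (Beta (1 + Complex c t) (- Complex c t) / (- Complex c t) * exp (Complex c t * of_real (ln a - z))))"
proof -
  let ?s = "Complex c t"
  let ?P = "Beta (1 + ?s) (- ?s) / (- ?s)"
  have "Re (of_real kZ - ?s) > 0" "Re (of_real kZ - ?s) < kZ + kW"
    using c kZ by auto
  note B = Beta_log_integral(2)[OF this]
  have "complex_of_real (kZ + kW) - (of_real kZ - ?s) = of_real kW + ?s"
    by simp
  then have Beta_eq: "Beta (of_real kZ - ?s) (of_real kW + ?s)
      = (CLINT z|lborel. exp ((of_real kZ - ?s) * of_real z) * of_real ((1 + exp z) powr - (kZ + kW)))"
    using B by simp
  have integrand: "exp ((of_real kZ - ?s) * of_real z) * of_real ((1 + exp z) powr - (kZ + kW)) *
        (?P * exp (?s * of_real (ln a)))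
      = of_real (exp (kZ * z) * (1 + exp z) powr - (kZ + kW)) * (?P * exp (?s * of_real (ln a - z)))" for z
  proof -
    have "exp ((of_real kZ - ?s) * of_real z) * exp (?s * of_real (ln a))
        = of_real (exp (kZ * z)) * exp (?s * of_real (ln a - z))"
      by (simp add: exp_add[symmetric] algebra_simps flip: exp_of_real)
    then show ?thesis
      by (simp add: mult_ac)
  qed
  have "of_real a powr ?s = exp (?s * of_real (ln a))"
    using a by (simp add: powr_def Ln_of_real mult.commute)
  moreover have "-1 < Re ?s" "Re ?s < 0"
    using c by simp_all
  ultimately have "meijerG_kernel 3 2 [0, 1 - kW, 1] [0, 0, kZ] ?s * of_real a powr ?s
      = of_real (Gamma (kZ + kW)) * (Beta (of_real kZ - ?s) (of_real kW + ?s) * (?P * exp (?s * of_real (ln a))))"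
    by (simp add: meijerG_kernel_3_2_factorization kZ kW mult_ac)
  then show ?thesis
    unfolding Beta_eq integral_mult_left_zero[symmetric] integrand .
qed

text \<open>The integrand of the ergodic rate after the substitution \<open>a x = e^z\<close>.\<close>
definition rate_integrand :: "real \<Rightarrow> real \<Rightarrow> real \<Rightarrow> real \<Rightarrow> real" where
  "rate_integrand kZ kW a z = exp (kZ * z) * (1 + exp z) powr - (kZ + kW) * ln (1 + exp (z - ln a))"

lemma meijerG_3_2_line_integral_exchange:
  fixes kZ kW a c :: real
  assumes kZ: "kZ > 0" and kW: "kW > 0" and a: "a > 0" and c: "-1 < c" "-kW < c" "c < 0"
  defines "w \<equiv> \<lambda>z. exp (kZ * z) * (1 + exp z) powr - (kZ + kW)"
  defines "P \<equiv> \<lambda>z. CLINT t|lborel. Beta (1 + Complex c t) (- Complex c t) / (- Complex c t)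
                                    * exp (Complex c t * of_real (ln a - z))"
  shows "integrable lborel (\<lambda>z. of_real (w z) * P z)"
    and "(CLINT t|lborel. meijerG_kernel 3 2 [0, 1 - kW, 1] [0, 0, kZ] (Complex c t) * of_real a powr Complex c t)
      = of_real (Gamma (kZ + kW)) * (CLINT z|lborel. of_real (w z) * P z)"
proof -
  have c': "-1 < c" "c < 0"
    using c by simp_all
  let ?B = "\<lambda>t. Beta (1 + Complex c t) (- Complex c t)"
  have [measurable]: "?B \<in> borel_measurable borel"
    using borel_measurable_continuous_onI[OF continuous_on_Beta_vertical[OF c']] by simp
  define F where "F t z = of_real (w z) * (?B t / (- Complex c t) * exp (Complex c t * of_real (ln a - z)))" for t z
  have Fm: "case_prod F \<in> borel_measurable (lborel \<Otimes>\<^sub>M lborel)"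
    unfolding F_def w_def by measurable
  have bound: "norm (F t z) \<le> (norm (?B t) / (- c) * exp (c * ln a)) * (w z * exp (- c * z))" for t z
  proof -
    have w_nonneg: "w z \<ge> 0"
      by (simp add: w_def)
    have "exp (c * (ln a - z)) = exp (c * ln a) * exp (- c * z)"
      by (simp add: exp_add[symmetric] algebra_simps)
    then have "norm (F t z) = w z * (norm (?B t / (- Complex c t)) * (exp (c * ln a) * exp (- c * z)))"
      unfolding F_def norm_mult norm_of_real abs_of_nonneg[OF w_nonneg] norm_exp_eq_Re by simp
    also have "\<dots> \<le> w z * (norm (?B t) / (- c) * (exp (c * ln a) * exp (- c * z)))"
      using norm_divide_le_abs_Re[of "- Complex c t" "?B t"] c w_nonneg
      by (intro mult_left_mono mult_right_mono) simp_all
    finally show ?thesis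
      by (simp only: mult_ac)
  qed
  have B_int: "integrable lborel (\<lambda>t. norm (?B t) / (- c) * exp (c * ln a))"
    using integrable_Beta_vertical[OF c'] by (intro Bochner_Integration.integrable_mult_left integrable_divide integrable_norm)
  have "w z * exp (- c * z) = exp ((kZ - c) * z) * (1 + exp z) powr - (kZ + kW)" for z
    by (simp add: w_def left_diff_distrib exp_diff exp_minus field_simps)
  then have w_int: "integrable lborel (\<lambda>z. w z * exp (- c * z))"
    using integrable_Beta_log_real[of "kZ - c" "kZ + kW"] c kZ by simp
  note Fubini = Fubini_integral_product_bound[OF Fm bound B_int w_int]
  have inner_t: "(CLINT t|lborel. F t z) = of_real (w z) * P z" for z
    unfolding F_def P_def by (rule integral_mult_right_zero)
  show "integrable lborel (\<lambda>z. of_real (w z) * P z)"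
    using lborel_pair.integrable_snd[OF Fubini(1)] by (simp add: inner_t)
  have "(CLINT t|lborel. meijerG_kernel 3 2 [0, 1 - kW, 1] [0, 0, kZ] (Complex c t) * of_real a powr Complex c t)
      = of_real (Gamma (kZ + kW)) * (CLINT t|lborel. CLINT z|lborel. F t z)"
    by (simp only: meijerG_kernel_3_2_integral[OF kZ kW a c] F_def w_def integral_mult_right_zero)
  also have "(CLINT t|lborel. CLINT z|lborel. F t z) = (CLINT z|lborel. CLINT t|lborel. F t z)"
    by (rule Fubini(2))
  finally show "(CLINT t|lborel. meijerG_kernel 3 2 [0, 1 - kW, 1] [0, 0, kZ] (Complex c t) * of_real a powr Complex c t)
      = of_real (Gamma (kZ + kW)) * (CLINT z|lborel. of_real (w z) * P z)"
    by (simp only: inner_t)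
qed

lemma meijerG_3_2_line_integral:
  fixes kZ kW a c :: real
  assumes kZ: "kZ > 0" and kW: "kW > 0" and a: "a > 0" and c: "-1 < c" "-kW < c" "c < 0"
  shows "integrable lborel (rate_integrand kZ kW a)"
    and "(CLINT t|lborel. meijerG_kernel 3 2 [0, 1 - kW, 1] [0, 0, kZ] (Complex c t) * of_real a powr Complex c t)
      = of_real (2 * pi * Gamma (kZ + kW) * (LINT z|lborel. rate_integrand kZ kW a z))"
proof -
  note exchange = meijerG_3_2_line_integral_exchange[OF kZ kW a c]
  have "-1 < c" "c < 0"
    using c by simp_all
  then have inner: "of_real (exp (kZ * z) * (1 + exp z) powr - (kZ + kW)) *
      (CLINT t|lborel. Beta (1 + Complex c t) (- Complex c t) / (- Complex c t) * exp (Complex c t * of_real (ln a - z)))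
      = of_real (2 * pi * rate_integrand kZ kW a z)" for z
    by (simp only: Beta_vertical_div_inversion) (simp add: rate_integrand_def)
  have "integrable lborel (\<lambda>z. Re (of_real (2 * pi * rate_integrand kZ kW a z)) / (2 * pi))"
    using exchange(1) unfolding inner by (intro integrable_divide integrable_Re)
  then show "integrable lborel (rate_integrand kZ kW a)"
    by simp
  show "(CLINT t|lborel. meijerG_kernel 3 2 [0, 1 - kW, 1] [0, 0, kZ] (Complex c t) * of_real a powr Complex c t)
      = of_real (2 * pi * Gamma (kZ + kW) * (LINT z|lborel. rate_integrand kZ kW a z))"
    unfolding exchange(2) inner by (simp add: mult_ac)
qed

lemma integrable_rate_integrand:
  assumes "kZ > 0" "kW > 0" "a > 0"
  shows "integrable lborel (rate_integrand kZ kW a)"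
  using assms by (intro meijerG_3_2_line_integral(1)[of _ _ _ "- min 1 kW / 2"]) (auto simp: min_def)

lemma meijerG_3_2_eq_rate_integral:
  assumes kZ: "kZ > 0" and kW: "kW > 0" and a: "a > 0"
  shows "meijerG 3 2 [0, 1 - kW, 1] [0, 0, kZ] a
      = of_real (Gamma (kZ + kW) * (LINT z|lborel. rate_integrand kZ kW a z))"
proof -
  have separating_iff: "meijerG_separating 3 2 [0, 1 - kW, 1] [0, 0, kZ] c \<longleftrightarrow> -1 < c \<and> -kW < c \<and> c < 0" for c
    using kZ by (auto simp: meijerG_separating_def numeral_3_eq_3 numeral_2_eq_2 less_Suc_eq)
  define c where "c = (SOME c. meijerG_separating 3 2 [0, 1 - kW, 1] [0, 0, kZ] c)"
  have "meijerG_separating 3 2 [0, 1 - kW, 1] [0, 0, kZ] (- min 1 kW / 2)"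
    using kW by (auto simp: separating_iff min_def)
  then have "meijerG_separating 3 2 [0, 1 - kW, 1] [0, 0, kZ] c"
    unfolding c_def by (rule someI)
  then have c: "-1 < c" "-kW < c" "c < 0"
    by (simp_all add: separating_iff)
  show ?thesis
    unfolding meijerG_def Let_def c_def[symmetric] meijerG_3_2_line_integral(2)[OF kZ kW a c]
    by (simp only: of_real_mult[symmetric]) simp
qed

lemma exp_times_gamma_c_pdf:
  fixes \<rho> \<zeta> kZ \<theta>Z kW \<theta>W u :: real
  assumes "\<rho> > 0" "\<zeta> > 0" "\<theta>Z > 0" "\<theta>W > 0"
  defines "a \<equiv> \<theta>W / (\<rho> * \<zeta> * \<theta>Z)"
  shows "exp u * (log 2 (1 + exp u) * gamma_c_pdf \<rho> \<zeta> kZ \<theta>Z kW \<theta>W (exp u))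
      = rate_integrand kZ kW a (ln a + u) / (Beta kZ kW * ln 2)"
proof -
  have a: "a > 0"
    using assms by (simp add: a_def)
  define y where "y = exp (ln a + u)"
  have "exp u * a = y"
    using a by (simp add: y_def exp_add)
  then have xy: "exp u * \<theta>W / (\<rho> * \<zeta> * \<theta>Z) = y"
    by (simp add: a_def)
  have "y * y powr (kZ - 1) = exp (kZ * (ln a + u))"
  proof -
    have "y powr 1 * y powr (kZ - 1) = y powr (1 + (kZ - 1))"
      by (rule powr_add[symmetric])
    then show ?thesis
      by (simp add: y_def powr_def)
  qed
  with \<open>exp u * a = y\<close> have "exp u * a * y powr (kZ - 1) = exp (kZ * (ln a + u))"
    by simp
  moreover have "gamma_c_pdf \<rho> \<zeta> kZ \<theta>Z kW \<theta>W (exp u) = a / Beta kZ kW * y powr (kZ - 1) * (1 + y) powr (- (kZ + kW))"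
    unfolding gamma_c_pdf_def xy by (simp add: a_def)
  ultimately show ?thesis
    by (simp add: rate_integrand_def y_def log_def field_simps)
qed

lemma ergodic_rate_c_eq_rate_integral:
  fixes \<rho> \<zeta> kZ \<theta>Z kW \<theta>W :: real
  assumes "\<rho> > 0" "\<zeta> > 0" and kZ: "kZ > 0" and "\<theta>Z > 0" and kW: "kW > 0" and "\<theta>W > 0"
  defines "a \<equiv> \<theta>W / (\<rho> * \<zeta> * \<theta>Z)"
  shows "ergodic_rate_c \<rho> \<zeta> kZ \<theta>Z kW \<theta>W = (LINT z|lborel. rate_integrand kZ kW a z) / (Beta kZ kW * ln 2)"
proof -
  have a: "a > 0"
    using assms by (simp add: a_def)
  define f where "f x = log 2 (1 + x) * gamma_c_pdf \<rho> \<zeta> kZ \<theta>Z kW \<theta>W x" for x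
  have f_meas: "f \<in> borel_measurable borel"
    unfolding f_def gamma_c_pdf_def by measurable
  then have subst_meas: "(\<lambda>u. exp u * f (exp u)) \<in> borel_measurable borel"
    by measurable
  have subst: "exp u * f (exp u) = rate_integrand kZ kW a (ln a + 1 * u) / (Beta kZ kW * ln 2)" for u
    using exp_times_gamma_c_pdf[of \<rho> \<zeta> \<theta>Z \<theta>W u kZ kW] assms by (simp add: f_def a_def)
  have "integrable lborel (\<lambda>u. exp u * f (exp u))"
    unfolding subst using lborel_integrable_real_affine[OF integrable_rate_integrand[OF kZ kW a], of 1 "ln a"]
    by simp
  then have f_int: "f absolutely_integrable_on {0<..}"
    using integrable_exp_substitution_iff[OF subst_meas] by simp
  have "ergodic_rate_c \<rho> \<zeta> kZ \<theta>Z kW \<theta>W = (LBINT x:{0<..}. f x)"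
    by (simp add: ergodic_rate_c_def f_def)
  also have "\<dots> = integral {0<..} f"
    using f_int set_integrable_lborel_iff_absolutely_integrable_on[OF f_meas]
    by (intro set_borel_integral_eq_integral(2)) simp
  also have "\<dots> = (LINT u|lborel. exp u * f (exp u))"
    by (rule integral_exp_substitution[OF f_int subst_meas, symmetric])
  also have "\<dots> = (LINT u|lborel. rate_integrand kZ kW a (ln a + 1 * u)) / (Beta kZ kW * ln 2)"
    unfolding subst by simp
  also have "(LINT u|lborel. rate_integrand kZ kW a (ln a + 1 * u)) = (LINT z|lborel. rate_integrand kZ kW a z)"
    using lborel_integral_real_affine[of 1 "rate_integrand kZ kW a" "ln a"] by simp
  finally show ?thesis .
qed

theorem theorem2:
  fixes \<rho> \<zeta> kZ \<theta>Z kW \<theta>W :: real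
  assumes "\<rho> > 0" and "\<zeta> > 0"
    and "kZ > 0" and "\<theta>Z > 0" and "kW > 0" and "\<theta>W > 0"
  shows "complex_of_real (ergodic_rate_c \<rho> \<zeta> kZ \<theta>Z kW \<theta>W) =
    complex_of_real (1 / (ln 2 * (Beta kZ kW * Gamma (kZ + kW)))) *
    meijerG 3 2 [0, 1 - kW, 1] [0, 0, kZ] (\<theta>W / (\<rho> * \<zeta> * \<theta>Z))"
proof -
  define a where "a = \<theta>W / (\<rho> * \<zeta> * \<theta>Z)"
  define I where "I = (LINT z|lborel. rate_integrand kZ kW a z)"
  have "a > 0"
    using assms by (simp add: a_def)
  then have G: "meijerG 3 2 [0, 1 - kW, 1] [0, 0, kZ] a = of_real (Gamma (kZ + kW) * I)"
    using assms by (simp add: meijerG_3_2_eq_rate_integral I_def)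
  have R: "ergodic_rate_c \<rho> \<zeta> kZ \<theta>Z kW \<theta>W = I / (Beta kZ kW * ln 2)"
    using ergodic_rate_c_eq_rate_integral[OF assms] by (simp add: I_def a_def)
  have "Gamma (kZ + kW) > 0" "Beta kZ kW > 0"
    using assms by (simp_all add: Beta_def Gamma_real_pos)
  then have E: "I / (Beta kZ kW * ln 2) = 1 / (ln 2 * (Beta kZ kW * Gamma (kZ + kW))) * (Gamma (kZ + kW) * I)"
    by (simp add: field_simps)
  show ?thesis
    unfolding a_def[symmetric] R E G of_real_mult ..
qed

end
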